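(* Let $\sigma>n$. There is a constant $C$ such that for all $y\in\mathbb{R}^n$, $$\mathcal{A}_y:=\sup_{w\in\mathbb{R}^n}\int_{|x|>2|w|}\sup_{j\in\mathbb{Z}}\big|\Lambda^y_{j,\sigma}(x-w)-\Lambda^y_{j,\sigma}(x)\big|\,dx\le C\ln(e+|y|).$$
   Context: For $j\in\mathbb{Z}$, $y\in\mathbb{R}^n$, $\sigma>n$, $\Lambda^y_{j,\sigma}(x):=\frac{2^{jn}}{(1+|2^jx-y|)^{\sigma}}$. $C$ depends only on $n$ and $\sigma$. *)

theory Defs
  imports "HOL-Analysis.Analysis"
begin

definition Lambda :: "int \<Rightarrow> real \<Rightarrow> 'a::euclidean_space \<Rightarrow> 'a \<Rightarrow> real" where
  "Lambda j \<sigma> y x = (2 powr (real_of_int j * real DIM('a))) /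
      (1 + norm ((2 powr real_of_int j) *\<^sub>R x - y)) powr \<sigma>"

end

theory Submission
  imports Defs
begin

text \<open>
  Write Lambda_j(x) = 2^(jn) phi(2^j x - y) with the profile phi(z) = (1 + |z|)^(-sigma).
  The substitution u = 2^j x turns the j-th integral into G(2^j w), where
  G(v) is the integral of |phi(u - v - y) - phi(u - y)| over |u| > 2|v|. Three estimates
  control G: G(v) = O(|v|) for |v| <= 1/2, because phi is Lipschitz relative to itself;
  G(v) <= 2 |phi|_1 always; and G(v) = O(|v|^(n - sigma)) once |v| >= 4|y|, since then both
  terms only see the tail of phi. Bounding the supremum over j by the sum over j and splitting
  at the scale j0 with 2^j0 |w| in (1/4, 1/2], the scales below j0 and those with
  2^j |w| >= 4|y| form geometric series, and only the O(log(e + |y|)) scales in between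
  contribute the constant bound.
\<close>

section \<open>The decay profile\<close>

definition decay :: "real \<Rightarrow> 'a::real_normed_vector \<Rightarrow> real" where
  "decay s z = 1 / (1 + norm z) powr s"

lemma decay_pos: "0 < decay s z"
proof -
  have "0 < 1 + norm z" using norm_ge_zero[of z] by linarith
  then show ?thesis by (simp add: decay_def)
qed

lemma decay_nonneg [simp]: "0 \<le> decay s z"
  using decay_pos[of s z] by simp

lemma decay_le_one: "0 \<le> s \<Longrightarrow> decay s z \<le> 1"
  by (simp add: decay_def divide_le_eq ge_one_powr_ge_zero)

lemma decay_le_norm_powr:
  assumes "0 \<le> s" "0 < r" "r \<le> norm z"
  shows "decay s z \<le> r powr (- s)"
proof -
  have "decay s z \<le> 1 / r powr s"
    unfolding decay_def using assms by (intro divide_left_mono powr_mono2) auto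
  then show ?thesis by (simp add: powr_minus_divide)
qed

lemma measurable_decay [measurable]:
  "f \<in> borel_measurable M \<Longrightarrow> (\<lambda>x. decay s (f x)) \<in> borel_measurable M"
  unfolding decay_def by measurable

lemma Lambda_eq_decay:
  "Lambda j s y x = (2 powr of_int j) ^ DIM('a) * decay s ((2 powr of_int j) *\<^sub>R x - y)"
  for y x :: "'a::euclidean_space"
  by (simp add: Lambda_def decay_def powr_realpow[symmetric] powr_powr)

lemma inverse_powr_diff_le:
  fixes a b s :: real
  assumes "0 \<le> a" "a \<le> b" "0 \<le> s"
  shows "1 / (1 + a) powr s - 1 / (1 + b) powr s \<le> s * (b - a) / (1 + a) powr s"
proof -
  define p where "p = (1 + b) / (1 + a)"
  have p1: "1 \<le> p" using assms by (simp add: p_def field_simps)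
  have "1 - s * ln p \<le> exp (- (s * ln p))" using exp_ge_add_one_self[of "- (s * ln p)"] by simp
  also have "exp (- (s * ln p)) = p powr (- s)" using p1 by (simp add: powr_def)
  finally have "1 - p powr (- s) \<le> s * ln p" by simp
  also have "\<dots> \<le> s * (p - 1)" using p1 assms by (intro mult_left_mono ln_le_minus_one) auto
  also have "p - 1 = (b - a) / (1 + a)" using assms by (simp add: p_def field_simps)
  also have "\<dots> \<le> b - a" using assms by (simp add: divide_le_eq mult_le_cancel_left1)
  finally have "1 - p powr (- s) \<le> s * (b - a)" using assms by (simp add: mult_left_mono)
  moreover have "1 / (1 + a) powr s - 1 / (1 + b) powr s = (1 - p powr (- s)) / (1 + a) powr s"
    using assms by (simp add: p_def powr_minus_divide powr_divide diff_divide_distrib)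
  ultimately show ?thesis using assms by (simp add: divide_right_mono)
qed

lemma abs_inverse_powr_diff_le:
  fixes a b s :: real
  assumes "0 \<le> a" "0 \<le> b" "0 \<le> s"
  shows "\<bar>1 / (1 + a) powr s - 1 / (1 + b) powr s\<bar> \<le> s * \<bar>a - b\<bar> / (1 + min a b) powr s"
proof (cases "a \<le> b")
  case True
  have "1 / (1 + b) powr s \<le> 1 / (1 + a) powr s"
    using True assms by (intro divide_left_mono powr_mono2) auto
  then show ?thesis using inverse_powr_diff_le[of a b s] True assms by (simp add: min_def)
next
  case False
  have "1 / (1 + a) powr s \<le> 1 / (1 + b) powr s"
    using False assms by (intro divide_left_mono powr_mono2) auto
  then show ?thesis using inverse_powr_diff_le[of b a s] False assms by (simp add: min_def)
qed

text \<open>Moving the argument by at most \<open>1/2\<close> changes \<open>1 + norm z\<close> by at most a factor \<open>2\<close>.\<close>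
lemma abs_decay_diff_le:
  fixes z v :: "'a::real_normed_vector"
  assumes "norm v \<le> 1/2" "0 \<le> s"
  shows "\<bar>decay s (z - v) - decay s z\<bar> \<le> s * 2 powr s * norm v * decay s z"
proof -
  have pz: "0 < 1 + norm z" using norm_ge_zero[of z] by linarith
  have d: "\<bar>norm (z - v) - norm z\<bar> \<le> norm v"
    using norm_triangle_ineq3[of "z - v" z] by simp
  have m: "(1 + norm z) / 2 \<le> 1 + min (norm (z - v)) (norm z)"
    using d assms norm_ge_zero[of z] unfolding abs_le_iff min_def by argo
  have "\<bar>decay s (z - v) - decay s z\<bar>
      \<le> s * \<bar>norm (z - v) - norm z\<bar> / (1 + min (norm (z - v)) (norm z)) powr s"
    unfolding decay_def using assms by (intro abs_inverse_powr_diff_le) auto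
  also have "\<dots> \<le> s * norm v / ((1 + norm z) / 2) powr s"
    using d m assms pz by (intro frac_le mult_left_mono powr_mono2) auto
  also have "\<dots> = s * 2 powr s * norm v * decay s z"
    using pz by (simp add: decay_def powr_divide)
  finally show ?thesis .
qed

section \<open>Dyadic scales\<close>

lemma ex_power_of_two_ivl:
  fixes x :: real
  assumes "0 < x"
  obtains j :: int where "2 powr j \<le> x" "x < 2 powr (j + 1)"
  using floor_log_eq_powr_iff[OF assms, of 2] by auto

lemma ex_power_of_two_ivl_nat:
  fixes x :: real
  assumes "1 \<le> x"
  obtains k :: nat where "2 ^ k \<le> x" "x < 2 ^ Suc k"
proof -
  obtain j :: int where j: "2 powr j \<le> x" "x < 2 powr (j + 1)"
    using ex_power_of_two_ivl[of x] assms by auto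
  have "0 \<le> j"
  proof (rule ccontr)
    assume "\<not> 0 \<le> j"
    then have "2 powr (j + 1) \<le> 2 powr 0" by (intro powr_mono) auto
    with j assms show False by simp
  qed
  then show ?thesis
    using that[of "nat j"] j by (simp add: powr_realpow[symmetric] powr_add)
qed

lemma ex_power_of_two_ge_log_bounded:
  fixes Y :: real
  assumes "0 \<le> Y"
  obtains N :: nat where "8 * Y \<le> 2 ^ N" "real N \<le> 6 * ln (exp 1 + Y)"
proof
  define L where "L = ln (exp 1 + Y)"
  have eY: "0 < exp 1 + Y" using assms by (simp add: add_pos_nonneg)
  have L1: "1 \<le> L"
    unfolding L_def using assms by (subst ln_ge_iff) (auto simp: add_pos_nonneg)
  have l0: "0 \<le> log 2 (8 * Y + 1)" using assms by simp
  show "8 * Y \<le> 2 ^ nat \<lceil>log 2 (8 * Y + 1)\<rceil>"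
    using power_of_nat_log_ge[of 2 "8 * Y + 1"] by simp
  have "ln (8 * Y + 1) \<le> ln (8 * (exp 1 + Y))"
    using assms exp_ge_add_one_self[of 1] by (subst ln_le_cancel_iff) (auto simp: add_pos_nonneg)
  also have "\<dots> = 3 * ln 2 + L"
    unfolding L_def using eY ln_realpow[of 2 3] by (subst ln_mult) auto
  finally have "log 2 (8 * Y + 1) \<le> 3 + L / ln 2"
    by (simp add: log_def divide_right_mono add_divide_distrib[symmetric] field_simps)
  moreover have "L / ln 2 \<le> L / (2/3)"
    using L1 ln2_ge_two_thirds by (intro divide_left_mono) auto
  ultimately show "real (nat \<lceil>log 2 (8 * Y + 1)\<rceil>) \<le> 6 * ln (exp 1 + Y)"
    using l0 L1 unfolding L_def by (simp add: of_nat_nat) linarith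
qed

section \<open>Integrals over Euclidean space\<close>

lemma le_suminf_ennreal: "(f::nat \<Rightarrow> ennreal) k \<le> suminf f"
  using sum_le_suminf[of f "{k}"] by simp

lemma nn_integral_lborel_affine:
  fixes f :: "'a::euclidean_space \<Rightarrow> ennreal"
  assumes [measurable]: "f \<in> borel_measurable borel" and "c \<noteq> 0"
  shows "(\<integral>\<^sup>+x. f x \<partial>lborel) = ennreal (\<bar>c\<bar> ^ DIM('a)) * (\<integral>\<^sup>+x. f (t + c *\<^sub>R x) \<partial>lborel)"
  by (subst lborel_affine[OF \<open>c \<noteq> 0\<close>, of t])
     (simp add: nn_integral_density nn_integral_distr nn_integral_cmult)

lemma nn_integral_lborel_translate:
  fixes f :: "'a::euclidean_space \<Rightarrow> ennreal"
  assumes "f \<in> borel_measurable borel"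
  shows "(\<integral>\<^sup>+x. f (x + c) \<partial>lborel) = (\<integral>\<^sup>+x. f x \<partial>lborel)"
  using nn_integral_lborel_affine[OF assms, of 1 c] by (simp add: add.commute)

lemma mem_cube_if_norm_le:
  fixes u :: "'a::euclidean_space"
  assumes "norm u \<le> r"
  shows "u \<in> cbox (- (r *\<^sub>R One)) (r *\<^sub>R One)"
  using assms by (auto simp: mem_box inner_sum_Basis abs_le_iff dest!: Basis_le_norm[of _ u])

lemma emeasure_lborel_cube:
  assumes "0 \<le> r"
  shows "emeasure lborel (cbox (- (r *\<^sub>R One)) (r *\<^sub>R (One::'a::euclidean_space)))
    = ennreal ((2 * r) ^ DIM('a))"
proof -
  have "emeasure lborel (cbox (- (r *\<^sub>R One)) (r *\<^sub>R (One::'a)))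
      = ennreal (\<Prod>b\<in>(Basis::'a set). 2 * r)"
    using assms by (auto simp: emeasure_lborel_cbox_eq inner_sum_Basis algebra_simps intro!: prod.cong)
  then show ?thesis by (simp add: prod_constant)
qed

definition tail_const :: "nat \<Rightarrow> real \<Rightarrow> real" where
  "tail_const n s = 4 ^ n / (1 - 2 powr (real n - s))"

lemma two_powr_less_one: "real n < s \<Longrightarrow> 2 powr (real n - s) < (1::real)"
  by (intro powr_less_one) auto

lemma tail_const_pos: "real n < s \<Longrightarrow> 0 < tail_const n s"
  using two_powr_less_one[of n s] by (simp add: tail_const_def)

lemma norm_powr_le_dyadic_cube_sum:
  fixes u :: "'a::euclidean_space"
  assumes "0 < R" "0 \<le> s"
  shows "ennreal (norm u powr (- s)) * indicator {u. R < norm u} u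
    \<le> (\<Sum>k. ennreal ((2 ^ k * R) powr (- s))
            * indicator (cbox (- ((2 ^ Suc k * R) *\<^sub>R One)) ((2 ^ Suc k * R) *\<^sub>R One)) u)"
proof (cases "R < norm u")
  case True
  then obtain k where k: "2 ^ k \<le> norm u / R" "norm u / R < 2 ^ Suc k"
    using ex_power_of_two_ivl_nat[of "norm u / R"] assms by auto
  have "norm u powr (- s) \<le> (2 ^ k * R) powr (- s)"
    using k assms by (intro powr_mono2') (auto simp: field_simps)
  moreover have "u \<in> cbox (- ((2 ^ Suc k * R) *\<^sub>R One)) ((2 ^ Suc k * R) *\<^sub>R One)"
    using k assms by (intro mem_cube_if_norm_le) (simp add: field_simps)
  ultimately have "ennreal (norm u powr (- s)) * indicator {u. R < norm u} u
      \<le> ennreal ((2 ^ k * R) powr (- s))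
          * indicator (cbox (- ((2 ^ Suc k * R) *\<^sub>R One)) ((2 ^ Suc k * R) *\<^sub>R One)) u"
    using True by simp
  also have "\<dots> \<le> (\<Sum>k. ennreal ((2 ^ k * R) powr (- s))
      * indicator (cbox (- ((2 ^ Suc k * R) *\<^sub>R One)) ((2 ^ Suc k * R) *\<^sub>R One)) u)"
    by (rule le_suminf_ennreal)
  finally show ?thesis .
qed simp

lemma nn_integral_norm_powr_tail_le:
  assumes R: "0 < R" and s: "real DIM('a) < s"
  shows "(\<integral>\<^sup>+u\<in>{u::'a::euclidean_space. R < norm u}. ennreal (norm u powr (- s)) \<partial>lborel)
    \<le> ennreal (tail_const DIM('a) s * R powr (real DIM('a) - s))"
proof -
  define n where "n = real DIM('a)"
  define q where "q = 2 powr (n - s)"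
  define B where "B k = cbox (- ((2 ^ Suc k * R) *\<^sub>R One)) ((2 ^ Suc k * R) *\<^sub>R (One::'a))" for k
  have q: "0 < q" "q < 1" using two_powr_less_one[of "DIM('a)" s] s by (auto simp: q_def n_def)
  have s0: "0 \<le> s" using s of_nat_0_le_iff[of "DIM('a)"] by linarith
  have shell: "ennreal ((2 ^ k * R) powr (- s)) * emeasure lborel (B k)
      = ennreal (4 ^ DIM('a) * R powr (n - s) * q ^ k)" for k
  proof -
    have "(2 ^ k * R) powr (- s) * (2 * (2 ^ Suc k * R)) ^ DIM('a)
        = 4 ^ DIM('a) * ((2 ^ k * R) powr (- s) * (2 ^ k * R) powr n)"
      using R by (simp add: n_def powr_realpow power_mult_distrib)
    also have "\<dots> = 4 ^ DIM('a) * ((2 ^ k) powr (n - s) * R powr (n - s))"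
    proof -
      have "(2 ^ k * R) powr (- s) * (2 ^ k * R) powr n = (2 ^ k * R) powr (n - s)"
        by (simp add: powr_add[symmetric])
      then show ?thesis using R by (simp add: powr_mult)
    qed
    also have "(2 ^ k) powr (n - s) = q ^ k"
      by (simp add: q_def powr_realpow[symmetric] powr_powr powr_power mult.commute)
    finally show ?thesis
      using R unfolding B_def by (subst emeasure_lborel_cube) (simp_all add: ennreal_mult'[symmetric] mult_ac)
  qed
  have "(\<integral>\<^sup>+u\<in>{u::'a. R < norm u}. ennreal (norm u powr (- s)) \<partial>lborel)
      \<le> (\<integral>\<^sup>+u. (\<Sum>k. ennreal ((2 ^ k * R) powr (- s)) * indicator (B k) u) \<partial>lborel)"
    unfolding B_def by (intro nn_integral_mono norm_powr_le_dyadic_cube_sum R s0)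
  also have "\<dots> = (\<Sum>k. ennreal ((2 ^ k * R) powr (- s)) * emeasure lborel (B k))"
    by (subst nn_integral_suminf) (auto simp: B_def nn_integral_cmult_indicator)
  also have "\<dots> = ennreal (4 ^ DIM('a) * R powr (n - s) / (1 - q))"
    unfolding shell
  proof (rule suminf_ennreal_eq)
    show "(\<lambda>k. 4 ^ DIM('a) * R powr (n - s) * q ^ k) sums (4 ^ DIM('a) * R powr (n - s) / (1 - q))"
      using sums_mult[OF geometric_sums[of q], of "4 ^ DIM('a) * R powr (n - s)"] q
      by (simp add: field_simps)
  qed (use q in simp)
  finally show ?thesis by (simp add: tail_const_def n_def q_def)
qed

definition decay_L1_const :: "nat \<Rightarrow> real \<Rightarrow> real" where
  "decay_L1_const n s = 2 ^ n + tail_const n s"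

lemma decay_L1_const_pos: "real n < s \<Longrightarrow> 0 < decay_L1_const n s"
  using tail_const_pos[of n s] by (simp add: decay_L1_const_def add_pos_pos)

lemma nn_integral_decay_le:
  fixes c :: "'a::euclidean_space"
  assumes s: "real DIM('a) < s"
  shows "(\<integral>\<^sup>+u. ennreal (decay s (u - c)) \<partial>lborel) \<le> ennreal (decay_L1_const DIM('a) s)"
proof -
  have s0: "0 \<le> s" using s of_nat_0_le_iff[of "DIM('a)"] by linarith
  have split: "ennreal (decay s z)
      \<le> indicator (cbox (- One) One) z + ennreal (norm z powr (- s)) * indicator {z. 1 < norm z} z"
    for z :: 'a
  proof (cases "1 < norm z")
    case True
    then have "ennreal (decay s z) \<le> ennreal (norm z powr (- s))"
      using s0 by (intro ennreal_leI decay_le_norm_powr) auto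
    then show ?thesis using True by (simp add: add_increasing)
  next
    case False
    then show ?thesis using mem_cube_if_norm_le[of z 1] decay_le_one[OF s0, of z] by simp
  qed
  have "(\<integral>\<^sup>+u. ennreal (decay s (u - c)) \<partial>lborel) = (\<integral>\<^sup>+z. ennreal (decay s (z::'a)) \<partial>lborel)"
    using nn_integral_lborel_translate[of "\<lambda>z. ennreal (decay s z)" "- c"] by simp
  also have "\<dots> \<le> (\<integral>\<^sup>+z. indicator (cbox (- One) (One::'a)) z
      + ennreal (norm z powr (- s)) * indicator {z. 1 < norm z} z \<partial>lborel)"
    by (intro nn_integral_mono split)
  also have "\<dots> = emeasure lborel (cbox (- One) (One::'a))
      + (\<integral>\<^sup>+z\<in>{z::'a. 1 < norm z}. ennreal (norm z powr (- s)) \<partial>lborel)"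
    by (subst nn_integral_add) auto
  also have "\<dots> \<le> ennreal (2 ^ DIM('a)) + ennreal (tail_const DIM('a) s * 1 powr (real DIM('a) - s))"
    using emeasure_lborel_cube[of 1, where 'a='a]
    by (intro add_mono nn_integral_norm_powr_tail_le s) simp_all
  also have "\<dots> = ennreal (decay_L1_const DIM('a) s)"
    using tail_const_pos[OF s] by (simp add: decay_L1_const_def ennreal_plus[symmetric] del: ennreal_plus)
  finally show ?thesis .
qed

section \<open>The rescaled difference integral\<close>

definition decay_diff_integral :: "real \<Rightarrow> 'a::euclidean_space \<Rightarrow> 'a \<Rightarrow> ennreal" where
  "decay_diff_integral s y v =
    (\<integral>\<^sup>+u\<in>{u. norm u > 2 * norm v}. ennreal \<bar>decay s (u - v - y) - decay s (u - y)\<bar> \<partial>lborel)"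

lemma decay_diff_integral_le_L1:
  fixes y v :: "'a::euclidean_space"
  assumes s: "real DIM('a) < s"
  shows "decay_diff_integral s y v \<le> ennreal (2 * decay_L1_const DIM('a) s)"
proof -
  have "decay_diff_integral s y v
      \<le> (\<integral>\<^sup>+u. ennreal (decay s (u - (v + y))) + ennreal (decay s (u - y)) \<partial>lborel)"
    unfolding decay_diff_integral_def
  proof (intro nn_integral_mono)
    fix u :: 'a
    have "\<bar>decay s (u - v - y) - decay s (u - y)\<bar> \<le> decay s (u - (v + y)) + decay s (u - y)"
      using decay_pos[of s "u - (v + y)"] decay_pos[of s "u - y"] by (simp add: diff_diff_eq abs_le_iff)
    then show "ennreal \<bar>decay s (u - v - y) - decay s (u - y)\<bar> * indicator {u. norm u > 2 * norm v} u
        \<le> ennreal (decay s (u - (v + y))) + ennreal (decay s (u - y))"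
      by (auto simp: indicator_def ennreal_plus[symmetric] simp del: ennreal_plus intro!: ennreal_leI)
  qed
  also have "\<dots> = (\<integral>\<^sup>+u. ennreal (decay s (u - (v + y))) \<partial>lborel)
      + (\<integral>\<^sup>+u. ennreal (decay s (u - y)) \<partial>lborel)"
    by (rule nn_integral_add) auto
  also have "\<dots> \<le> ennreal (decay_L1_const DIM('a) s) + ennreal (decay_L1_const DIM('a) s)"
    by (intro add_mono nn_integral_decay_le s)
  also have "\<dots> = ennreal (2 * decay_L1_const DIM('a) s)"
    using decay_L1_const_pos[OF s] by (simp add: ennreal_plus[symmetric] del: ennreal_plus)
  finally show ?thesis .
qed

lemma decay_diff_integral_le_small:
  fixes y v :: "'a::euclidean_space"
  assumes s: "real DIM('a) < s" and v: "norm v \<le> 1/2"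
  shows "decay_diff_integral s y v \<le> ennreal (s * 2 powr s * norm v * decay_L1_const DIM('a) s)"
proof -
  have s0: "0 \<le> s" using s of_nat_0_le_iff[of "DIM('a)"] by linarith
  have "decay_diff_integral s y v
      \<le> (\<integral>\<^sup>+u. ennreal (s * 2 powr s * norm v) * ennreal (decay s (u - y)) \<partial>lborel)"
    unfolding decay_diff_integral_def
  proof (intro nn_integral_mono)
    fix u :: 'a
    have "\<bar>decay s (u - v - y) - decay s (u - y)\<bar> \<le> s * 2 powr s * norm v * decay s (u - y)"
      using abs_decay_diff_le[OF v s0, of "u - y"] by (simp add: algebra_simps)
    then show "ennreal \<bar>decay s (u - v - y) - decay s (u - y)\<bar> * indicator {u. norm u > 2 * norm v} u
        \<le> ennreal (s * 2 powr s * norm v) * ennreal (decay s (u - y))"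
      using s0 by (auto simp: indicator_def ennreal_mult[symmetric] intro!: ennreal_leI)
  qed
  also have "\<dots> = ennreal (s * 2 powr s * norm v) * (\<integral>\<^sup>+u. ennreal (decay s (u - y)) \<partial>lborel)"
    by (rule nn_integral_cmult) auto
  also have "\<dots> \<le> ennreal (s * 2 powr s * norm v) * ennreal (decay_L1_const DIM('a) s)"
    by (intro mult_left_mono nn_integral_decay_le s) auto
  also have "\<dots> = ennreal (s * 2 powr s * norm v * decay_L1_const DIM('a) s)"
    using s0 decay_L1_const_pos[OF s] by (simp add: ennreal_mult)
  finally show ?thesis .
qed

text \<open>Both translates of \<open>y\<close> stay at distance \<open>\<ge> norm u / 4\<close> from \<open>u\<close>, so only the tail of
  the decay profile is integrated.\<close>
lemma decay_diff_integral_le_far: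
  fixes y v :: "'a::euclidean_space"
  assumes s: "real DIM('a) < s" and v: "4 * norm y \<le> norm v" "v \<noteq> 0"
  shows "decay_diff_integral s y v
    \<le> ennreal (4 powr s * tail_const DIM('a) s * (2 * norm v) powr (real DIM('a) - s))"
proof -
  have s0: "0 \<le> s" using s of_nat_0_le_iff[of "DIM('a)"] by linarith
  have "decay_diff_integral s y v
      \<le> (\<integral>\<^sup>+u\<in>{u::'a. 2 * norm v < norm u}. ennreal (4 powr s) * ennreal (norm u powr (- s)) \<partial>lborel)"
    unfolding decay_diff_integral_def
  proof (intro nn_integral_mono)
    fix u :: 'a
    show "ennreal \<bar>decay s (u - v - y) - decay s (u - y)\<bar> * indicator {u. norm u > 2 * norm v} u
      \<le> ennreal (4 powr s) * ennreal (norm u powr (- s)) * indicator {u. 2 * norm v < norm u} u"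
    proof (cases "2 * norm v < norm u")
      case True
      have u0: "0 < norm u / 4" using True norm_ge_zero[of v] by linarith
      have far: "decay s z \<le> 4 powr s * norm u powr (- s)" if "norm u / 4 \<le> norm z" for z
        using decay_le_norm_powr[OF s0 u0 that] u0 by (simp add: powr_divide powr_minus_divide)
      have "norm u / 4 \<le> norm (u - v - y)"
        using True v norm_triangle_ineq4[of u "v + y"] norm_triangle_ineq[of v y]
        by (simp add: diff_diff_eq) (smt (verit) norm_minus_commute norm_triangle_ineq2)
      moreover have "norm u / 4 \<le> norm (u - y)"
        using True v norm_triangle_ineq2[of u y] norm_ge_zero[of y] by linarith
      ultimately have "\<bar>decay s (u - v - y) - decay s (u - y)\<bar> \<le> 4 powr s * norm u powr (- s)"
        using far decay_pos[of s "u - v - y"] decay_pos[of s "u - y"] by (smt (verit))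
      then show ?thesis using True by (simp add: ennreal_mult[symmetric] ennreal_leI)
    qed simp
  qed
  also have "\<dots> = ennreal (4 powr s)
      * (\<integral>\<^sup>+u\<in>{u::'a. 2 * norm v < norm u}. ennreal (norm u powr (- s)) \<partial>lborel)"
    by (subst nn_integral_cmult[symmetric]) (auto simp: mult.assoc)
  also have "\<dots> \<le> ennreal (4 powr s) * ennreal (tail_const DIM('a) s * (2 * norm v) powr (real DIM('a) - s))"
    using v by (intro mult_left_mono nn_integral_norm_powr_tail_le s) auto
  also have "\<dots> = ennreal (4 powr s * tail_const DIM('a) s * (2 * norm v) powr (real DIM('a) - s))"
    using tail_const_pos[OF s] by (simp add: ennreal_mult mult.assoc)
  finally show ?thesis .
qed

lemma nn_integral_Lambda_diff_eq:
  fixes y w :: "'a::euclidean_space"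
  shows "(\<integral>\<^sup>+x\<in>{x. norm x > 2 * norm w}. ennreal \<bar>Lambda j s y (x - w) - Lambda j s y x\<bar> \<partial>lborel)
    = decay_diff_integral s y (2 powr of_int j *\<^sub>R w)"
proof -
  define c :: real where "c = 2 powr of_int j"
  have c0: "0 < c" by (simp add: c_def)
  define h where "h u = ennreal \<bar>decay s (u - c *\<^sub>R w - y) - decay s (u - y)\<bar>
    * indicator {u. norm u > 2 * norm (c *\<^sub>R w)} u" for u :: 'a
  have [measurable]: "h \<in> borel_measurable borel" unfolding h_def by measurable
  have rescale: "ennreal \<bar>Lambda j s y (x - w) - Lambda j s y x\<bar> * indicator {x. norm x > 2 * norm w} x
      = ennreal (c ^ DIM('a)) * h (0 + c *\<^sub>R x)" for x
  proof -
    have "\<bar>Lambda j s y (x - w) - Lambda j s y x\<bar>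
        = c ^ DIM('a) * \<bar>decay s (c *\<^sub>R x - c *\<^sub>R w - y) - decay s (c *\<^sub>R x - y)\<bar>"
      unfolding Lambda_eq_decay c_def[symmetric] using c0
      by (simp add: scaleR_diff_right right_diff_distrib[symmetric] abs_mult)
    moreover have "norm (c *\<^sub>R x) > 2 * norm (c *\<^sub>R w) \<longleftrightarrow> norm x > 2 * norm w"
      using c0 by simp
    ultimately show ?thesis
      unfolding h_def using c0 by (simp add: indicator_def ennreal_mult[symmetric])
  qed
  have "(\<integral>\<^sup>+x\<in>{x. norm x > 2 * norm w}. ennreal \<bar>Lambda j s y (x - w) - Lambda j s y x\<bar> \<partial>lborel)
      = ennreal (c ^ DIM('a)) * (\<integral>\<^sup>+x. h (0 + c *\<^sub>R x) \<partial>lborel)"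
    unfolding rescale by (rule nn_integral_cmult) measurable
  also have "\<dots> = (\<integral>\<^sup>+u. h u \<partial>lborel)"
    using nn_integral_lborel_affine[of h c 0] c0 by simp
  also have "\<dots> = decay_diff_integral s y (c *\<^sub>R w)"
    unfolding decay_diff_integral_def h_def by (simp add: algebra_simps)
  finally show ?thesis by (simp add: c_def)
qed

section \<open>Summing over scales\<close>

lemma SUP_le_suminf_two_sided:
  fixes F :: "int \<Rightarrow> ennreal"
  shows "(SUP j. F j) \<le> (\<Sum>k. F (j0 - int k)) + (\<Sum>k. F (j0 + 1 + int k))"
proof (rule SUP_least)
  fix j :: int
  show "F j \<le> (\<Sum>k. F (j0 - int k)) + (\<Sum>k. F (j0 + 1 + int k))"
  proof (cases "j \<le> j0")
    case True
    then have "F j = F (j0 - int (nat (j0 - j)))" by simp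
    also have "\<dots> \<le> (\<Sum>k. F (j0 - int k))" by (rule le_suminf_ennreal)
    finally show ?thesis by (simp add: add_increasing2)
  next
    case False
    then have "F j = F (j0 + 1 + int (nat (j - j0 - 1)))" by simp
    also have "\<dots> \<le> (\<Sum>k. F (j0 + 1 + int k))" by (rule le_suminf_ennreal)
    finally show ?thesis by (simp add: add_increasing)
  qed
qed

lemma nn_integral_SUP_Lambda_diff_le_suminf:
  fixes y w :: "'a::euclidean_space"
  shows "(\<integral>\<^sup>+x\<in>{x. norm x > 2 * norm w}.
      (SUP j. ennreal \<bar>Lambda j s y (x - w) - Lambda j s y x\<bar>) \<partial>lborel)
    \<le> (\<Sum>k. decay_diff_integral s y (2 powr of_int (j0 - int k) *\<^sub>R w))
      + (\<Sum>k. decay_diff_integral s y (2 powr of_int (j0 + 1 + int k) *\<^sub>R w))"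
proof -
  define G where "G j x = ennreal \<bar>Lambda j s y (x - w) - Lambda j s y x\<bar>
    * indicator {x. norm x > 2 * norm w} x" for j x
  have [measurable]: "G j \<in> borel_measurable lborel" for j
    unfolding G_def Lambda_def by measurable
  have "(\<integral>\<^sup>+x\<in>{x. norm x > 2 * norm w}.
      (SUP j. ennreal \<bar>Lambda j s y (x - w) - Lambda j s y x\<bar>) \<partial>lborel)
      \<le> (\<integral>\<^sup>+x. (\<Sum>k. G (j0 - int k) x) + (\<Sum>k. G (j0 + 1 + int k) x) \<partial>lborel)"
  proof (intro nn_integral_mono)
    fix x :: 'a
    show "(SUP j. ennreal \<bar>Lambda j s y (x - w) - Lambda j s y x\<bar>) * indicator {x. norm x > 2 * norm w} x
        \<le> (\<Sum>k. G (j0 - int k) x) + (\<Sum>k. G (j0 + 1 + int k) x)"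
      using SUP_le_suminf_two_sided[of "\<lambda>j. ennreal \<bar>Lambda j s y (x - w) - Lambda j s y x\<bar>" j0]
      by (cases "norm x > 2 * norm w") (simp_all add: G_def)
  qed
  also have "\<dots> = (\<Sum>k. \<integral>\<^sup>+x. G (j0 - int k) x \<partial>lborel) + (\<Sum>k. \<integral>\<^sup>+x. G (j0 + 1 + int k) x \<partial>lborel)"
    by (simp add: nn_integral_add nn_integral_suminf)
  finally show ?thesis
    unfolding G_def nn_integral_Lambda_diff_eq .
qed

lemma suminf_decay_diff_integral_small_scales:
  fixes y w :: "'a::euclidean_space"
  assumes s: "real DIM('a) < s" and small: "2 powr of_int j0 * norm w \<le> 1/2"
  shows "(\<Sum>k. decay_diff_integral s y (2 powr of_int (j0 - int k) *\<^sub>R w))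
    \<le> ennreal (s * 2 powr s * decay_L1_const DIM('a) s)"
proof -
  define A where "A = s * 2 powr s * decay_L1_const DIM('a) s"
  define c where "c = 2 powr of_int j0 * norm w"
  have "0 \<le> s" using s of_nat_0_le_iff[of "DIM('a)"] by linarith
  then have A0: "0 \<le> A" using decay_L1_const_pos[OF s] by (simp add: A_def)
  have c0: "0 \<le> c" by (simp add: c_def)
  have norm_eq: "norm (2 powr of_int (j0 - int k) *\<^sub>R w) = c * (1/2) ^ k" for k
    by (simp add: c_def powr_diff powr_realpow power_divide)
  have "(\<Sum>k. decay_diff_integral s y (2 powr of_int (j0 - int k) *\<^sub>R w)) \<le> (\<Sum>k. ennreal (A * c * (1/2) ^ k))"
  proof (intro suminf_le allI summableI)
    fix k
    have "c * (1/2) ^ k \<le> c" using c0 by (intro mult_left_le) (simp_all add: power_le_one)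
    then have "c * (1/2) ^ k \<le> 1/2" using small unfolding c_def by linarith
    then show "decay_diff_integral s y (2 powr of_int (j0 - int k) *\<^sub>R w) \<le> ennreal (A * c * (1/2) ^ k)"
      using decay_diff_integral_le_small[OF s, of "2 powr of_int (j0 - int k) *\<^sub>R w" y]
      unfolding norm_eq by (simp add: A_def mult_ac)
  qed
  also have "\<dots> = ennreal (A * c * 2)"
    using A0 c0 sums_mult[OF geometric_sums[of "1/2::real"], of "A * c"]
    by (intro suminf_ennreal_eq) simp_all
  also have "\<dots> \<le> ennreal A"
    using A0 small by (intro ennreal_leI) (simp add: c_def mult_left_le mult.assoc)
  finally show ?thesis by (simp add: A_def)
qed

lemma decay_diff_integral_far_scale_le:
  fixes y w :: "'a::euclidean_space"
  assumes s: "real DIM('a) < s" and large: "1/4 < 2 powr of_int j0 * norm w"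
    and N: "8 * norm y \<le> 2 ^ N" "N \<le> k"
  shows "decay_diff_integral s y (2 powr of_int (j0 + 1 + int k) *\<^sub>R w)
    \<le> ennreal (4 powr s * tail_const DIM('a) s * (2 powr (real DIM('a) - s)) ^ k)"
proof -
  define c where "c = 2 powr of_int j0 * norm w"
  define v where "v = 2 powr of_int (j0 + 1 + int k) *\<^sub>R w"
  have norm_v: "norm v = 2 * c * 2 ^ k"
    by (simp add: v_def c_def powr_add powr_realpow)
  have "8 * norm y \<le> 2 ^ k" using N by (smt (verit) power_increasing_iff)
  moreover have "2 ^ k \<le> 4 * c * 2 ^ k"
    using mult_right_mono[of 1 "4 * c" "2 ^ k"] large by (simp add: c_def)
  ultimately have "4 * norm y \<le> norm v" and scale: "2 ^ k \<le> 2 * norm v"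
    unfolding norm_v by linarith+
  moreover have "v \<noteq> 0" using large by (auto simp: v_def)
  ultimately have "decay_diff_integral s y v
      \<le> ennreal (4 powr s * tail_const DIM('a) s * (2 * norm v) powr (real DIM('a) - s))"
    by (intro decay_diff_integral_le_far s)
  also have "\<dots> \<le> ennreal (4 powr s * tail_const DIM('a) s * (2 powr (real DIM('a) - s)) ^ k)"
  proof (intro ennreal_leI mult_left_mono)
    have "(2 * norm v) powr (real DIM('a) - s) \<le> (2 ^ k) powr (real DIM('a) - s)"
      using s scale by (intro powr_mono2') auto
    also have "\<dots> = (2 powr (real DIM('a) - s)) ^ k"
      by (simp add: powr_realpow[symmetric] powr_powr powr_power mult.commute)
    finally show "(2 * norm v) powr (real DIM('a) - s) \<le> (2 powr (real DIM('a) - s)) ^ k" .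
  qed (use tail_const_pos[OF s] in simp)
  finally show ?thesis unfolding v_def .
qed

lemma suminf_decay_diff_integral_large_scales:
  fixes y w :: "'a::euclidean_space"
  assumes s: "real DIM('a) < s" and large: "1/4 < 2 powr of_int j0 * norm w"
    and N: "8 * norm y \<le> 2 ^ N"
  shows "(\<Sum>k. decay_diff_integral s y (2 powr of_int (j0 + 1 + int k) *\<^sub>R w))
    \<le> ennreal (2 * decay_L1_const DIM('a) s * real N
        + 4 powr s * tail_const DIM('a) s / (1 - 2 powr (real DIM('a) - s)))"
proof -
  define B where "B = 2 * decay_L1_const DIM('a) s"
  define D where "D = 4 powr s * tail_const DIM('a) s"
  define q where "q = 2 powr (real DIM('a) - s)"
  have B0: "0 \<le> B" and D0: "0 \<le> D" and q: "0 < q" "q < 1"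
    using decay_L1_const_pos[OF s] tail_const_pos[OF s] two_powr_less_one[OF s]
    by (simp_all add: B_def D_def q_def)
  have "(\<Sum>k. decay_diff_integral s y (2 powr of_int (j0 + 1 + int k) *\<^sub>R w))
      \<le> (\<Sum>k. ennreal ((if k < N then B else 0) + D * q ^ k))"
  proof (intro suminf_le allI summableI)
    fix k
    have "ennreal B \<le> ennreal ((if k < N then B else 0) + D * q ^ k)" if "k < N"
      using that D0 q by (intro ennreal_leI) simp
    moreover have "ennreal (D * q ^ k) \<le> ennreal ((if k < N then B else 0) + D * q ^ k)"
      using B0 by (intro ennreal_leI) simp
    ultimately show "decay_diff_integral s y (2 powr of_int (j0 + 1 + int k) *\<^sub>R w)
        \<le> ennreal ((if k < N then B else 0) + D * q ^ k)"
      using decay_diff_integral_le_L1[OF s, of y "2 powr of_int (j0 + 1 + int k) *\<^sub>R w"]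
        decay_diff_integral_far_scale_le[OF s large N, of k]
      unfolding B_def D_def q_def by (cases "k < N") (auto intro: order_trans)
  qed
  also have "\<dots> = ennreal (B * real N + D / (1 - q))"
  proof (intro suminf_ennreal_eq sums_add)
    show "(\<lambda>k. if k < N then B else 0) sums (B * real N)"
      using sums_If_finite_set[of "{..<N}" "\<lambda>_. B"] by (simp add: lessThan_def mult.commute)
    show "(\<lambda>k. D * q ^ k) sums (D / (1 - q))"
      using sums_mult[OF geometric_sums[of q], of D] q by (simp add: divide_inverse)
  qed (use B0 D0 q in auto)
  finally show ?thesis by (simp add: B_def D_def q_def)
qed

definition hoermander_const :: "nat \<Rightarrow> real \<Rightarrow> real" where
  "hoermander_const n s = (s * 2 powr s + 12) * decay_L1_const n s
    + 4 powr s * tail_const n s / (1 - 2 powr (real n - s))"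

lemma nn_integral_SUP_Lambda_diff_le:
  fixes y w :: "'a::euclidean_space"
  assumes s: "real DIM('a) < s"
  shows "(\<integral>\<^sup>+x\<in>{x. norm x > 2 * norm w}.
      (SUP j. ennreal \<bar>Lambda j s y (x - w) - Lambda j s y x\<bar>) \<partial>lborel)
    \<le> ennreal (hoermander_const DIM('a) s * ln (exp 1 + norm y))"
proof (cases "w = 0")
  case False
  define L where "L = ln (exp 1 + norm y)"
  define I where "I = decay_L1_const DIM('a) s"
  define D where "D = 4 powr s * tail_const DIM('a) s / (1 - 2 powr (real DIM('a) - s))"
  have L1: "1 \<le> L" unfolding L_def by (subst ln_ge_iff) (auto simp: add_pos_nonneg)
  have I0: "0 \<le> I" and D0: "0 \<le> D" and s0: "0 \<le> s"
    using decay_L1_const_pos[OF s] tail_const_pos[OF s] two_powr_less_one[OF s] s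
    by (simp_all add: I_def D_def)
  obtain j0 :: int where "2 powr j0 \<le> 1 / (2 * norm w)" "1 / (2 * norm w) < 2 powr (j0 + 1)"
    using ex_power_of_two_ivl[of "1 / (2 * norm w)"] False by auto
  then have small: "2 powr j0 * norm w \<le> 1/2" and large: "1/4 < 2 powr j0 * norm w"
    using False by (simp_all add: field_simps powr_add)
  obtain N where N: "8 * norm y \<le> 2 ^ N" "real N \<le> 6 * L"
    using ex_power_of_two_ge_log_bounded[of "norm y"] unfolding L_def by auto
  have "(\<integral>\<^sup>+x\<in>{x. norm x > 2 * norm w}.
      (SUP j. ennreal \<bar>Lambda j s y (x - w) - Lambda j s y x\<bar>) \<partial>lborel)
      \<le> ennreal (s * 2 powr s * I) + ennreal (2 * I * real N + D)"
    using nn_integral_SUP_Lambda_diff_le_suminf[of s y w j0]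
      add_mono[OF suminf_decay_diff_integral_small_scales[OF s small, of y]
                  suminf_decay_diff_integral_large_scales[OF s large N(1)]]
    unfolding I_def D_def by (rule order_trans)
  also have "\<dots> \<le> ennreal (hoermander_const DIM('a) s * L)"
  proof -
    have "s * 2 powr s * I \<le> s * 2 powr s * I * L" using mult_left_mono[OF L1, of "s * 2 powr s * I"] I0 s0 by simp
    moreover have "2 * I * real N \<le> 12 * I * L" using mult_left_mono[OF N(2), of "2 * I"] I0 by simp
    moreover have "D \<le> D * L" using mult_left_mono[OF L1 D0] by simp
    moreover have "hoermander_const DIM('a) s * L = s * 2 powr s * I * L + 12 * I * L + D * L"
      by (simp add: hoermander_const_def I_def D_def algebra_simps)
    ultimately have "s * 2 powr s * I + (2 * I * real N + D) \<le> hoermander_const DIM('a) s * L"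
      by linarith
    then show ?thesis using I0 D0 s0 by (simp add: ennreal_plus[symmetric] ennreal_leI del: ennreal_plus)
  qed
  finally show ?thesis unfolding L_def .
qed simp

theorem mainTheorem9:
  fixes \<sigma> :: real
  assumes "\<sigma> > real DIM('a::euclidean_space)"
  shows "\<exists>C::real. \<forall>y::'a.
    (SUP w\<in>(UNIV::'a set). \<integral>\<^sup>+ x \<in> {x. norm x > 2 * norm w}.
        (SUP j\<in>(UNIV::int set). ennreal \<bar>Lambda j \<sigma> y (x - w) - Lambda j \<sigma> y x\<bar>) \<partial>lborel)
    \<le> ennreal (C * ln (exp 1 + norm y))"
  using nn_integral_SUP_Lambda_diff_le[OF assms] by (intro exI allI SUP_least)

end
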